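(* Consider the DRV process with choice function $k(n)$ satisfying $k(n)\to\infty$ and $k(n)\ge\log_2 n$. Then there is a constant $C$ such that for all $n$ and every time $t\le n$, the expected number of red edges plus the expected number of green edges among the first $t$ edges added is at most $C\,\frac{n}{k(n)}$.
   Context: The DRV process (Degree Rule with Varying Choice): fix a function $k=k(n)$ with $2\le k(n)\le n$. Start at time $t=0$ with $n$ isolated vertices and no edges. At each time step $t=0,1,2,\dots$ (one edge is added per step, so after $t$ steps the graph has $t$ edges; multiple edges are allowed), independently of the past choose a set $V_t$ of $k(n)$ distinct vertices uniformly at random, and let $V_{t,d}$ be the set of vertices in $V_t$ whose current degree is $d$. If $|V_{t,0}|\ge 2$, add an edge between two vertices of $V_{t,0}$ sampled uniformly at random without replacement; otherwise, if $|V_{t,1}|\ge 2$, add an edge between two vertices of $V_{t,1}$ sampled uniformly at random without replacement; otherwise add an edge between two vertices of $V_t$ sampled uniformly at random without replacement. Edge types and colors: an edge is an $(i,j)$ edge if, at the moment it was added, its two endpoints had degrees $i$ and $j$. Each added edge is colored as follows: a $(0,0)$ edge added at a time $t\le n/2$ is blue; a $(1,1)$ edge added at a time $t\ge n/2$ is blue; a $(0,1)$ or $(1,1)$ edge added at a time $t< n/2$ is green; every other edge (i.e. $(0,0)$ or $(0,1)$ edges added after time $n/2$, and any $(i,j)$ edge with $i\ge2$ or $j\ge 2$ at any time) is red. *)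

theory Defs
  imports "HOL-Probability.Probability"
begin

text \<open>The graph after t steps is recorded as a list
of the t edges added so far, in order of addition (the edge at list position s was added
at time s). Each entry is ((a,b),(i,j)): the endpoints a, b (a \<noteq> b) and the degrees
i, j of a and b at the moment the edge was added. Multiple edges are allowed.\<close>

type_synonym drv_edge = "(nat \<times> nat) \<times> (nat \<times> nat)"
type_synonym drv_graph = "drv_edge list"

definition drv_deg :: "drv_graph \<Rightarrow> nat \<Rightarrow> nat" where
  "drv_deg G v = length (filter (\<lambda>e. fst (fst e) = v) G) + length (filter (\<lambda>e. snd (fst e) = v) G)"

definition drv_add_edge :: "drv_graph \<Rightarrow> nat \<Rightarrow> nat \<Rightarrow> drv_graph" where
  "drv_add_edge G a b = G @ [((a, b), (drv_deg G a, drv_deg G b))]"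

definition drv_pool :: "drv_graph \<Rightarrow> nat set \<Rightarrow> nat set" where
  "drv_pool G V =
     (if card {v \<in> V. drv_deg G v = 0} \<ge> 2 then {v \<in> V. drv_deg G v = 0}
      else if card {v \<in> V. drv_deg G v = 1} \<ge> 2 then {v \<in> V. drv_deg G v = 1}
      else V)"

definition drv_step :: "nat \<Rightarrow> nat \<Rightarrow> drv_graph \<Rightarrow> drv_graph pmf" where
  "drv_step n k G =
     do { V \<leftarrow> pmf_of_set {V. V \<subseteq> {..<n} \<and> card V = k};
          let A = drv_pool G V;
          (a, b) \<leftarrow> pmf_of_set {(a, b). a \<in> A \<and> b \<in> A \<and> a \<noteq> b};
          return_pmf (drv_add_edge G a b) }"

primrec drv :: "nat \<Rightarrow> nat \<Rightarrow> nat \<Rightarrow> drv_graph pmf" where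
  "drv n k 0 = return_pmf []"
| "drv n k (Suc t) = bind_pmf (drv n k t) (drv_step n k)"

datatype edge_color = Blue | Green | Red

definition edge_color :: "nat \<Rightarrow> nat \<Rightarrow> nat \<times> nat \<Rightarrow> edge_color" where
  "edge_color n s ij =
     (if ij = (0, 0) \<and> real s \<le> real n / 2 then Blue
      else if ij = (1, 1) \<and> real s \<ge> real n / 2 then Blue
      else if (ij = (0, 1) \<or> ij = (1, 0) \<or> ij = (1, 1)) \<and> real s < real n / 2 then Green
      else Red)"

definition num_color :: "nat \<Rightarrow> edge_color \<Rightarrow> nat \<Rightarrow> drv_graph \<Rightarrow> nat" where
  "num_color n c t G = card {s. s < t \<and> s < length G \<and> edge_color n s (snd (G ! s)) = c}"

end

theory Submission
  imports Defs
begin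

text \<open>Track the potential \<Phi> = (number of non-blue edges) + (number of isolated vertices).
While t < n/2, a step whose sample V contains two isolated vertices adds a blue (0,0) edge and
destroys two isolated vertices, so \<Phi> drops by 2; any other step raises \<Phi> by at most 1.
After time n/2, \<Phi> can only grow when V contains at most two vertices of degree \<le> 1.
There are at least n - 2t isolated and at least n - t low-degree vertices, so the expected
increment at time t is at most -2 + 3 q(n - 2t), resp. q(n - t), where q(m) is the probability
that a uniform k-subset of an n-set meets a fixed m-set in at most two points. An upper
Vandermonde identity gives \<Sum>(m \<le> n) q(m) = 3(n+1)/(k+1); since every index m is hit at most
once in each phase, E \<Phi>(t) \<le> max(n - 2t, 0) + 12n/k, and subtracting the isolated vertices
leaves the non-blue edges, i.e. the red and green ones.\<close>

lemma drv_deg_Nil [simp]: "drv_deg [] v = 0"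
  by (simp add: drv_deg_def)

lemma drv_deg_Cons:
  "drv_deg (e # G) v = drv_deg G v + (if fst (fst e) = v then 1 else 0) + (if snd (fst e) = v then 1 else 0)"
  by (simp add: drv_deg_def)

lemma drv_deg_add_edge:
  "drv_deg (drv_add_edge G a b) v = drv_deg G v + (if v = a then 1 else 0) + (if v = b then 1 else 0)"
  by (simp add: drv_deg_def drv_add_edge_def)

lemma sum_drv_deg_le:
  assumes "finite S"
  shows "(\<Sum>v\<in>S. drv_deg G v) \<le> 2 * length G"
proof (induction G)
  case Nil
  then show ?case by simp
next
  case (Cons e G)
  have indicator_le: "(\<Sum>v\<in>S. if x = v then 1 else 0::nat) \<le> 1" for x
    using assms by (cases "x \<in> S") simp_all
  have "(\<Sum>v\<in>S. drv_deg (e # G) v) = (\<Sum>v\<in>S. drv_deg G v)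
      + (\<Sum>v\<in>S. if fst (fst e) = v then 1 else 0) + (\<Sum>v\<in>S. if snd (fst e) = v then 1 else 0)"
    by (simp add: drv_deg_Cons sum.distrib)
  also have "\<dots> \<le> 2 * length G + 1 + 1"
    using Cons indicator_le[of "fst (fst e)"] indicator_le[of "snd (fst e)"] by linarith
  finally show ?case by simp
qed

lemma card_drv_deg_gt_le:
  assumes "finite S"
  shows "Suc d * card {v \<in> S. d < drv_deg G v} \<le> 2 * length G"
proof -
  let ?N = "{v \<in> S. d < drv_deg G v}"
  have "Suc d * card ?N = (\<Sum>v\<in>?N. Suc d)" by simp
  also have "\<dots> \<le> (\<Sum>v\<in>?N. drv_deg G v)" by (intro sum_mono) auto
  also have "\<dots> \<le> 2 * length G" using assms by (intro sum_drv_deg_le) simp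
  finally show ?thesis .
qed

definition isolated_vertices :: "nat \<Rightarrow> drv_graph \<Rightarrow> nat set" where
  "isolated_vertices n G = {v \<in> {..<n}. drv_deg G v = 0}"

definition low_degree_vertices :: "nat \<Rightarrow> drv_graph \<Rightarrow> nat set" where
  "low_degree_vertices n G = {v \<in> {..<n}. drv_deg G v \<le> 1}"

lemma card_degree_split:
  "card {v \<in> {..<n}. drv_deg G v \<le> d} + card {v \<in> {..<n}. d < drv_deg G v} = n"
proof -
  have "card {v \<in> {..<n}. drv_deg G v \<le> d} + card {v \<in> {..<n}. d < drv_deg G v}
      = card ({v \<in> {..<n}. drv_deg G v \<le> d} \<union> {v \<in> {..<n}. d < drv_deg G v})"
    by (subst card_Un_disjoint) auto
  also have "{v \<in> {..<n}. drv_deg G v \<le> d} \<union> {v \<in> {..<n}. d < drv_deg G v} = {..<n}"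
    by auto
  finally show ?thesis by simp
qed

lemma card_isolated_vertices_ge: "n \<le> card (isolated_vertices n G) + 2 * length G"
  using card_degree_split[of n G 0] card_drv_deg_gt_le[of "{..<n}" 0 G]
  by (simp add: isolated_vertices_def)

lemma card_low_degree_vertices_ge: "n \<le> card (low_degree_vertices n G) + length G"
  using card_degree_split[of n G 1] card_drv_deg_gt_le[of "{..<n}" 1 G]
  by (simp add: low_degree_vertices_def)

lemma isolated_vertices_add_edge:
  "isolated_vertices n (drv_add_edge G a b) = isolated_vertices n G - {a, b}"
  by (auto simp: isolated_vertices_def drv_deg_add_edge)

definition nonblue_edges :: "nat \<Rightarrow> drv_graph \<Rightarrow> nat" where
  "nonblue_edges n G = card {s. s < length G \<and> edge_color n s (snd (G ! s)) \<noteq> Blue}"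

lemma nonblue_edges_add_edge:
  "nonblue_edges n (drv_add_edge G a b) = nonblue_edges n G
     + (if edge_color n (length G) (drv_deg G a, drv_deg G b) = Blue then 0 else 1)"
proof -
  let ?S = "{s. s < length G \<and> edge_color n s (snd (G ! s)) \<noteq> Blue}"
  have "{s. s < length (drv_add_edge G a b) \<and> edge_color n s (snd (drv_add_edge G a b ! s)) \<noteq> Blue}
     = ?S \<union> (if edge_color n (length G) (drv_deg G a, drv_deg G b) = Blue then {} else {length G})"
    by (auto simp: drv_add_edge_def nth_append less_Suc_eq)
  then show ?thesis by (simp add: nonblue_edges_def)
qed

lemma num_color_Red_plus_Green:
  assumes "length G = t"
  shows "num_color n Red t G + num_color n Green t G = nonblue_edges n G"
proof -
  let ?C = "\<lambda>c. {s. s < t \<and> s < length G \<and> edge_color n s (snd (G ! s)) = c}"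
  have "card (?C Red) + card (?C Green) = card (?C Red \<union> ?C Green)"
    by (subst card_Un_disjoint) auto
  also have "?C Red \<union> ?C Green = {s. s < length G \<and> edge_color n s (snd (G ! s)) \<noteq> Blue}"
    using assms by (auto intro: edge_color.exhaust)
  finally show ?thesis by (simp add: num_color_def nonblue_edges_def)
qed

definition drv_potential :: "nat \<Rightarrow> drv_graph \<Rightarrow> real" where
  "drv_potential n G = real (nonblue_edges n G) + real (card (isolated_vertices n G))"

definition drv_drift :: "nat \<Rightarrow> drv_graph \<Rightarrow> nat set \<Rightarrow> real" where
  "drv_drift n G V =
     (if 2 * length G < n then (if 2 \<le> card {v \<in> V. drv_deg G v = 0} then -2 else 1)
      else if card {v \<in> V. drv_deg G v = 0} + card {v \<in> V. drv_deg G v = 1} \<le> 2 then 1 else 0)"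

lemma drv_potential_add_edge_le:
  assumes V: "V \<subseteq> {..<n}" and ab: "a \<in> drv_pool G V" "b \<in> drv_pool G V" "a \<noteq> b"
  shows "drv_potential n (drv_add_edge G a b) \<le> drv_potential n G + drv_drift n G V"
proof -
  let ?Z = "isolated_vertices n G"
  let ?D0 = "{v \<in> V. drv_deg G v = 0}" and ?D1 = "{v \<in> V. drv_deg G v = 1}"
  let ?blue = "edge_color n (length G) (drv_deg G a, drv_deg G b) = Blue"
  have finZ: "finite ?Z" by (simp add: isolated_vertices_def)
  have Z_le: "card (isolated_vertices n (drv_add_edge G a b)) \<le> card ?Z"
    unfolding isolated_vertices_add_edge using finZ by (intro card_mono) auto
  have nonblue_le: "nonblue_edges n (drv_add_edge G a b) \<le> nonblue_edges n G + 1"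
    by (simp add: nonblue_edges_add_edge)
  consider (isolated) "2 \<le> card ?D0" | (leaf) "\<not> 2 \<le> card ?D0" "2 \<le> card ?D1"
    | (other) "\<not> 2 \<le> card ?D0" "\<not> 2 \<le> card ?D1"
    by blast
  then show ?thesis
  proof cases
    case isolated
    then have "a \<in> ?D0" "b \<in> ?D0" using ab by (auto simp: drv_pool_def)
    then have deg0: "drv_deg G a = 0" "drv_deg G b = 0" and sub: "{a, b} \<subseteq> ?Z"
      using V by (auto simp: isolated_vertices_def)
    have Z_eq: "card (isolated_vertices n (drv_add_edge G a b)) = card ?Z - 2"
      unfolding isolated_vertices_add_edge using finZ sub ab(3) by (subst card_Diff_subset) auto
    have Z_ge: "2 \<le> card ?Z" using card_mono[OF finZ sub] ab(3) by simp
    show ?thesis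
    proof (cases "2 * length G < n")
      case True
      then have ?blue by (simp add: deg0 edge_color_def)
      then show ?thesis using True isolated Z_eq Z_ge
        by (simp add: drv_potential_def drv_drift_def nonblue_edges_add_edge of_nat_diff)
    next
      case False
      then show ?thesis using nonblue_le Z_eq Z_ge
        by (simp add: drv_potential_def drv_drift_def of_nat_diff)
    qed
  next
    case leaf
    show ?thesis
    proof (cases "2 * length G < n")
      case True
      then show ?thesis using leaf nonblue_le Z_le by (simp add: drv_potential_def drv_drift_def)
    next
      case False
      have "drv_deg G a = 1" "drv_deg G b = 1" using ab leaf by (auto simp: drv_pool_def)
      then have ?blue using False by (simp add: edge_color_def)
      then show ?thesis using False Z_le
        by (simp add: drv_potential_def drv_drift_def nonblue_edges_add_edge)
    qed
  next
    case other
    then have "drv_drift n G V = 1"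
      by (auto simp: drv_drift_def)
    then show ?thesis using nonblue_le Z_le by (simp add: drv_potential_def)
  qed
qed

lemma sum_choose_mult_choose_diff:
  "(\<Sum>m\<le>n. (m choose j) * ((n - m) choose r)) = Suc n choose (j + r + 1)"
proof (induction n arbitrary: r)
  case 0
  then show ?case by (cases j; cases r) auto
next
  case (Suc n)
  show ?case
  proof (cases r)
    case 0
    then show ?thesis using sum_choose_upper[of j "Suc n"] by simp
  next
    case (Suc r')
    have "(\<Sum>m\<le>Suc n. (m choose j) * ((Suc n - m) choose r))
        = (\<Sum>m\<le>n. (m choose j) * ((Suc n - m) choose r))"
      using Suc by simp
    also have "\<dots> = (\<Sum>m\<le>n. (m choose j) * ((n - m) choose r') + (m choose j) * ((n - m) choose r))"
      by (intro sum.cong refl) (simp add: Suc Suc_diff_le algebra_simps)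
    also have "\<dots> = (Suc n choose (j + r' + 1)) + (Suc n choose (j + r + 1))"
      by (simp add: sum.distrib Suc.IH)
    also have "\<dots> = Suc (Suc n) choose (j + r + 1)"
      using Suc by simp
    finally show ?thesis .
  qed
qed

definition few_hits_count :: "nat \<Rightarrow> nat \<Rightarrow> nat \<Rightarrow> nat" where
  "few_hits_count n k m = (\<Sum>j\<le>2. (m choose j) * ((n - m) choose (k - j)))"

lemma sum_few_hits_count:
  assumes "2 \<le> k"
  shows "(\<Sum>m\<le>n. few_hits_count n k m) = 3 * (Suc n choose Suc k)"
proof -
  have "(\<Sum>m\<le>n. few_hits_count n k m) = (\<Sum>j\<le>2. \<Sum>m\<le>n. (m choose j) * ((n - m) choose (k - j)))"
    unfolding few_hits_count_def by (rule sum.swap)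
  also have "\<dots> = (\<Sum>j\<le>(2::nat). Suc n choose Suc k)"
    using assms by (intro sum.cong refl) (simp add: sum_choose_mult_choose_diff)
  finally show ?thesis by simp
qed

lemma card_subsets_Int_eq_le:
  assumes U: "finite U" and A: "A \<subseteq> U"
  shows "card {V. V \<subseteq> U \<and> card V = k \<and> card (V \<inter> A) = j}
           \<le> (card A choose j) * ((card U - card A) choose (k - j))"
proof -
  let ?T = "{B. B \<subseteq> A \<and> card B = j} \<times> {D. D \<subseteq> U - A \<and> card D = k - j}"
  have finA: "finite A" using U A finite_subset by blast
  have "card {V. V \<subseteq> U \<and> card V = k \<and> card (V \<inter> A) = j} \<le> card ?T"
  proof (rule card_inj_on_le[where f = "\<lambda>V. (V \<inter> A, V - A)"])
    show "inj_on (\<lambda>V. (V \<inter> A, V - A)) {V. V \<subseteq> U \<and> card V = k \<and> card (V \<inter> A) = j}"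
      by (rule inj_onI) (metis Int_Diff_Un prod.inject)
    show "(\<lambda>V. (V \<inter> A, V - A)) ` {V. V \<subseteq> U \<and> card V = k \<and> card (V \<inter> A) = j} \<subseteq> ?T"
    proof (rule image_subsetI)
      fix V assume "V \<in> {V. V \<subseteq> U \<and> card V = k \<and> card (V \<inter> A) = j}"
      then have V: "V \<subseteq> U" "card (V \<inter> A) = j" "card V = k" by auto
      have "finite V" using U V(1) finite_subset by blast
      then have "card (V - A) = k - j" using V by (simp add: card_Diff_subset_Int)
      then show "(V \<inter> A, V - A) \<in> ?T" using V by auto
    qed
    show "finite ?T" using U finA by auto
  qed
  also have "card ?T = (card A choose j) * ((card U - card A) choose (k - j))"
    using U A finA by (simp add: card_cartesian_product n_subsets card_Diff_subset)
  finally show ?thesis .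
qed

lemma card_subsets_Int_le_two:
  assumes A: "A \<subseteq> {..<n}" "m \<le> card A"
  shows "card {V. V \<subseteq> {..<n} \<and> card V = k \<and> card (V \<inter> A) \<le> 2} \<le> few_hits_count n k m"
proof -
  obtain A0 where A0: "A0 \<subseteq> A" "card A0 = m"
    using obtain_subset_with_card_n[OF A(2)] by blast
  have finA: "finite A" using A finite_subset by blast
  let ?S = "\<lambda>j. {V. V \<subseteq> {..<n} \<and> card V = k \<and> card (V \<inter> A0) = j}"
  have "{V. V \<subseteq> {..<n} \<and> card V = k \<and> card (V \<inter> A) \<le> 2} \<subseteq> (\<Union>j\<le>2. ?S j)"
  proof
    fix V assume "V \<in> {V. V \<subseteq> {..<n} \<and> card V = k \<and> card (V \<inter> A) \<le> 2}"
    moreover have "card (V \<inter> A0) \<le> card (V \<inter> A)" using finA A0 by (intro card_mono) auto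
    ultimately show "V \<in> (\<Union>j\<le>2. ?S j)" by auto
  qed
  then have "card {V. V \<subseteq> {..<n} \<and> card V = k \<and> card (V \<inter> A) \<le> 2} \<le> card (\<Union>j\<le>2. ?S j)"
    by (intro card_mono) auto
  also have "\<dots> \<le> (\<Sum>j\<le>2. card (?S j))"
    by (rule card_UN_le) simp
  also have "\<dots> \<le> few_hits_count n k m"
    unfolding few_hits_count_def using A A0 card_subsets_Int_eq_le[of "{..<n}" A0]
    by (intro sum_mono) auto
  finally show ?thesis .
qed

lemma expectation_bind_pmf_finite:
  fixes h :: "'b \<Rightarrow> real"
  assumes "finite (set_pmf p)" "\<And>x. x \<in> set_pmf p \<Longrightarrow> finite (set_pmf (f x))"
  shows "measure_pmf.expectation (p \<bind> f) h
           = measure_pmf.expectation p (\<lambda>x. measure_pmf.expectation (f x) h)"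
  using assms
  by (simp add: pmf_expectation_bind[of "set_pmf p"] integral_measure_pmf_real[of "set_pmf p"] mult.commute)

lemma expectation_mono_finite:
  fixes f g :: "'a \<Rightarrow> real"
  assumes "finite (set_pmf p)" "\<And>x. x \<in> set_pmf p \<Longrightarrow> f x \<le> g x"
  shows "measure_pmf.expectation p f \<le> measure_pmf.expectation p g"
  using assms by (intro integral_mono_AE integrable_measure_pmf_finite AE_pmfI) auto

definition k_subsets :: "nat \<Rightarrow> nat \<Rightarrow> nat set set" where
  "k_subsets n k = {V. V \<subseteq> {..<n} \<and> card V = k}"

definition distinct_pairs :: "'a set \<Rightarrow> ('a \<times> 'a) set" where
  "distinct_pairs A = {(a, b). a \<in> A \<and> b \<in> A \<and> a \<noteq> b}"

lemma drv_step_eq: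
  "drv_step n k G = pmf_of_set (k_subsets n k) \<bind>
     (\<lambda>V. pmf_of_set (distinct_pairs (drv_pool G V)) \<bind> (\<lambda>(a, b). return_pmf (drv_add_edge G a b)))"
  unfolding drv_step_def Let_def k_subsets_def distinct_pairs_def ..

lemma finite_k_subsets: "finite (k_subsets n k)"
  unfolding k_subsets_def by (rule finite_subset[of _ "Pow {..<n}"]) auto

lemma card_k_subsets: "card (k_subsets n k) = n choose k"
  unfolding k_subsets_def using n_subsets[of "{..<n}" k] by simp

lemma k_subsets_nonempty: "k \<le> n \<Longrightarrow> k_subsets n k \<noteq> {}"
  using card_k_subsets[of n k] by (metis card.empty zero_less_binomial less_irrefl)

lemma finite_distinct_pairs: "finite A \<Longrightarrow> finite (distinct_pairs A)"
  by (rule finite_subset[of _ "A \<times> A"]) (auto simp: distinct_pairs_def)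

lemma distinct_pairs_nonempty: "2 \<le> card A \<Longrightarrow> distinct_pairs A \<noteq> {}"
  by (auto simp: distinct_pairs_def numeral_2_eq_2 card_le_Suc_iff)

lemma drv_pool_subset: "drv_pool G V \<subseteq> V"
  by (auto simp: drv_pool_def)

lemma card_drv_pool_ge: "2 \<le> card V \<Longrightarrow> 2 \<le> card (drv_pool G V)"
  by (auto simp: drv_pool_def)

lemma distinct_pairs_drv_pool:
  assumes "V \<in> k_subsets n k" "2 \<le> k"
  shows "finite (distinct_pairs (drv_pool G V))" "distinct_pairs (drv_pool G V) \<noteq> {}"
proof -
  have "finite V" using assms(1) finite_subset by (auto simp: k_subsets_def)
  then show "finite (distinct_pairs (drv_pool G V))"
    using drv_pool_subset finite_subset by (blast intro: finite_distinct_pairs)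
  show "distinct_pairs (drv_pool G V) \<noteq> {}"
    using assms by (intro distinct_pairs_nonempty card_drv_pool_ge) (auto simp: k_subsets_def)
qed

lemma set_pmf_drv_step:
  assumes "2 \<le> k" "k \<le> n"
  shows "set_pmf (drv_step n k G)
           = (\<Union>V\<in>k_subsets n k. (\<lambda>(a, b). drv_add_edge G a b) ` distinct_pairs (drv_pool G V))"
  unfolding drv_step_eq using assms finite_k_subsets k_subsets_nonempty distinct_pairs_drv_pool
  by (auto simp: split_beta)

lemma finite_set_pmf_drv_step:
  "2 \<le> k \<Longrightarrow> k \<le> n \<Longrightarrow> finite (set_pmf (drv_step n k G))"
  by (simp add: set_pmf_drv_step finite_k_subsets distinct_pairs_drv_pool)

lemma drv_support:
  assumes "2 \<le> k" "k \<le> n"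
  shows "finite (set_pmf (drv n k t)) \<and> (\<forall>G\<in>set_pmf (drv n k t). length G = t)"
proof (induction t)
  case 0
  then show ?case by simp
next
  case (Suc t)
  have "length G' = Suc (length G)" if "G' \<in> set_pmf (drv_step n k G)" for G G'
    using that by (auto simp: set_pmf_drv_step[OF assms] drv_add_edge_def)
  then show ?case using Suc finite_set_pmf_drv_step[OF assms] by auto
qed

lemma expectation_drv_step_le:
  assumes k: "2 \<le> k" "k \<le> n"
  shows "measure_pmf.expectation (drv_step n k G) (drv_potential n)
           \<le> drv_potential n G + measure_pmf.expectation (pmf_of_set (k_subsets n k)) (drv_drift n G)"
proof -
  let ?pairs = "\<lambda>V. pmf_of_set (distinct_pairs (drv_pool G V))"
  let ?edge = "\<lambda>(a, b). return_pmf (drv_add_edge G a b)"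
  have subsets: "finite (set_pmf (pmf_of_set (k_subsets n k)))"
    "set_pmf (pmf_of_set (k_subsets n k)) = k_subsets n k"
    using finite_k_subsets k_subsets_nonempty[OF k(2)] by auto
  have pairs: "finite (set_pmf (?pairs V))" "set_pmf (?pairs V) = distinct_pairs (drv_pool G V)"
    if "V \<in> k_subsets n k" for V
    using distinct_pairs_drv_pool[OF that k(1)] by auto
  have inner: "measure_pmf.expectation (?pairs V \<bind> ?edge) (drv_potential n)
      \<le> drv_potential n G + drv_drift n G V" if V: "V \<in> k_subsets n k" for V
  proof -
    have "measure_pmf.expectation (?pairs V \<bind> ?edge) (drv_potential n)
        = measure_pmf.expectation (?pairs V) (\<lambda>(a, b). drv_potential n (drv_add_edge G a b))"
      using pairs[OF V] by (simp add: expectation_bind_pmf_finite split_def)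
    also have "\<dots> \<le> measure_pmf.expectation (?pairs V) (\<lambda>_. drv_potential n G + drv_drift n G V)"
      using pairs[OF V] V
      by (intro expectation_mono_finite)
         (auto simp: distinct_pairs_def k_subsets_def intro!: drv_potential_add_edge_le)
    finally show ?thesis by simp
  qed
  have "measure_pmf.expectation (drv_step n k G) (drv_potential n)
      = measure_pmf.expectation (pmf_of_set (k_subsets n k))
          (\<lambda>V. measure_pmf.expectation (?pairs V \<bind> ?edge) (drv_potential n))"
    unfolding drv_step_eq using subsets pairs
    by (subst expectation_bind_pmf_finite) (auto simp: split_beta)
  also have "\<dots> \<le> measure_pmf.expectation (pmf_of_set (k_subsets n k))
                   (\<lambda>V. drv_potential n G + drv_drift n G V)"
    using subsets inner by (intro expectation_mono_finite) auto
  also have "\<dots> = drv_potential n G + measure_pmf.expectation (pmf_of_set (k_subsets n k)) (drv_drift n G)"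
    using subsets by (subst Bochner_Integration.integral_add) (auto intro: integrable_measure_pmf_finite)
  finally show ?thesis .
qed

definition few_hits_prob :: "nat \<Rightarrow> nat \<Rightarrow> nat \<Rightarrow> real" where
  "few_hits_prob n k m = real (few_hits_count n k m) / real (n choose k)"

lemma prob_few_hits_le:
  assumes "k \<le> n" "A \<subseteq> {..<n}" "m \<le> card A"
  shows "measure_pmf.prob (pmf_of_set (k_subsets n k)) {V. card (V \<inter> A) \<le> 2} \<le> few_hits_prob n k m"
proof -
  have "k_subsets n k \<inter> {V. card (V \<inter> A) \<le> 2}
      = {V. V \<subseteq> {..<n} \<and> card V = k \<and> card (V \<inter> A) \<le> 2}"
    by (auto simp: k_subsets_def)
  then show ?thesis
    using assms(1) finite_k_subsets k_subsets_nonempty card_subsets_Int_le_two[OF assms(2,3), of k]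
    by (simp add: measure_pmf_of_set card_k_subsets few_hits_prob_def divide_right_mono)
qed

lemma expectation_affine_indicator:
  fixes c d :: real
  shows "measure_pmf.expectation p (\<lambda>x. c + d * indicator X x) = c + d * measure_pmf.prob p X"
  by (simp add: measure_pmf.emeasure_eq_measure)

definition drv_drift_bound :: "nat \<Rightarrow> nat \<Rightarrow> nat \<Rightarrow> real" where
  "drv_drift_bound n k t =
     (if 2 * t < n then 3 * few_hits_prob n k (n - 2 * t) else few_hits_prob n k (n - t))"

lemma expectation_drv_drift_le:
  assumes k: "k \<le> n"
  shows "measure_pmf.expectation (pmf_of_set (k_subsets n k)) (drv_drift n G)
           \<le> drv_drift_bound n k (length G) - (if 2 * length G < n then 2 else 0)"
proof -
  let ?p = "pmf_of_set (k_subsets n k)"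
  let ?Z = "isolated_vertices n G" and ?L = "low_degree_vertices n G"
  have Z_subset: "?Z \<subseteq> {..<n}" and L_subset: "?L \<subseteq> {..<n}"
    by (auto simp: isolated_vertices_def low_degree_vertices_def)
  have Z_large: "n - 2 * length G \<le> card ?Z"
    using card_isolated_vertices_ge[of n G] by linarith
  have L_large: "n - length G \<le> card ?L"
    using card_low_degree_vertices_ge[of n G] by linarith
  have support: "finite (set_pmf ?p)" "set_pmf ?p = k_subsets n k"
    using finite_k_subsets k_subsets_nonempty[OF k] by auto
  have D0: "{v \<in> V. drv_deg G v = 0} = V \<inter> ?Z" if "V \<in> k_subsets n k" for V
    using that by (auto simp: k_subsets_def isolated_vertices_def)
  have D01: "card {v \<in> V. drv_deg G v = 0} + card {v \<in> V. drv_deg G v = 1} = card (V \<inter> ?L)"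
    if "V \<in> k_subsets n k" for V
  proof -
    have "finite V" using that finite_subset by (auto simp: k_subsets_def)
    moreover have "V \<inter> ?L = {v \<in> V. drv_deg G v = 0} \<union> {v \<in> V. drv_deg G v = 1}"
      using that by (auto simp: k_subsets_def low_degree_vertices_def)
    ultimately show ?thesis by (simp add: card_Un_disjoint disjoint_iff)
  qed
  show ?thesis
  proof (cases "2 * length G < n")
    case True
    have "measure_pmf.expectation ?p (drv_drift n G)
        \<le> measure_pmf.expectation ?p (\<lambda>V. -2 + 3 * indicator {V. card (V \<inter> ?Z) \<le> 2} V)"
      using support True D0 by (intro expectation_mono_finite) (auto simp: drv_drift_def)
    also have "\<dots> \<le> -2 + 3 * few_hits_prob n k (n - 2 * length G)"
      using prob_few_hits_le[OF k _ Z_large] Z_subset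
      by (simp only: expectation_affine_indicator) simp
    finally show ?thesis using True by (simp add: drv_drift_bound_def)
  next
    case False
    have "measure_pmf.expectation ?p (drv_drift n G)
        \<le> measure_pmf.expectation ?p (\<lambda>V. 0 + 1 * indicator {V. card (V \<inter> ?L) \<le> 2} V)"
      using support False D01 by (intro expectation_mono_finite) (auto simp: drv_drift_def)
    also have "\<dots> \<le> few_hits_prob n k (n - length G)"
      using prob_few_hits_le[OF k _ L_large] L_subset
      by (simp only: expectation_affine_indicator) simp
    finally show ?thesis using False by (simp add: drv_drift_bound_def)
  qed
qed

lemma sum_few_hits_prob:
  assumes "2 \<le> k" "k \<le> n"
  shows "(\<Sum>m\<le>n. few_hits_prob n k m) = 3 * (real n + 1) / (real k + 1)"
proof -
  have "(real k + 1) * real (Suc n choose Suc k) = (real n + 1) * real (n choose k)"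
    by (metis Suc_times_binomial of_nat_Suc of_nat_mult add.commute)
  moreover have "real (n choose k) \<noteq> 0" using assms by simp
  ultimately show ?thesis
    using sum_few_hits_count[OF assms(1), of n]
    by (simp add: few_hits_prob_def flip: sum_divide_distrib of_nat_sum) (simp add: field_simps)
qed

lemma sum_reindex_le_atMost:
  fixes g :: "nat \<Rightarrow> real"
  assumes "inj_on h S" "h ` S \<subseteq> {..n}" "\<And>m. 0 \<le> g m"
  shows "(\<Sum>s\<in>S. g (h s)) \<le> (\<Sum>m\<le>n. g m)"
  using assms by (simp add: sum.reindex[symmetric, unfolded comp_def] sum_mono2)

lemma sum_drv_drift_bound_le:
  assumes "2 \<le> k" "k \<le> n" "t \<le> n"
  shows "(\<Sum>s<t. drv_drift_bound n k s) \<le> 12 * real n / real k"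
proof -
  have q_nonneg: "0 \<le> few_hits_prob n k m" for m by (simp add: few_hits_prob_def)
  have "(\<Sum>s<t. drv_drift_bound n k s)
      = 3 * (\<Sum>s\<in>{s\<in>{..<t}. 2 * s < n}. few_hits_prob n k (n - 2 * s))
        + (\<Sum>s\<in>{s\<in>{..<t}. \<not> 2 * s < n}. few_hits_prob n k (n - s))"
    by (simp add: drv_drift_bound_def sum.If_cases sum_distrib_left Int_def)
  also have "\<dots> \<le> 3 * (\<Sum>m\<le>n. few_hits_prob n k m) + (\<Sum>m\<le>n. few_hits_prob n k m)"
    using assms(3) q_nonneg
    by (intro add_mono mult_left_mono sum_reindex_le_atMost) (auto intro!: inj_onI)
  also have "\<dots> = 12 * (real n + 1) / (real k + 1)"
    using sum_few_hits_prob[OF assms(1,2)] by (simp add: field_simps)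
  also have "\<dots> \<le> 12 * real n / real k"
    using assms by (simp add: divide_simps) (simp add: algebra_simps)
  finally show ?thesis .
qed

lemma drv_potential_Nil: "drv_potential n [] = real n"
  by (simp add: drv_potential_def nonblue_edges_def isolated_vertices_def)

lemma expectation_drv_potential_le:
  assumes k: "2 \<le> k" "k \<le> n"
  shows "measure_pmf.expectation (drv n k t) (drv_potential n)
           \<le> max (real n - 2 * real t) 0 + (\<Sum>s<t. drv_drift_bound n k s)"
proof (induction t)
  case 0
  then show ?case by (simp add: drv_potential_Nil)
next
  case (Suc t)
  let ?p = "drv n k t"
  define c where "c = drv_drift_bound n k t - (if 2 * t < n then 2 else 0)"
  have support: "finite (set_pmf ?p)" "\<And>G. G \<in> set_pmf ?p \<Longrightarrow> length G = t"
    using drv_support[OF k, of t] by auto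
  have step: "measure_pmf.expectation (drv_step n k G) (drv_potential n) \<le> drv_potential n G + c"
    if "G \<in> set_pmf ?p" for G
    using expectation_drv_step_le[OF k, of G] expectation_drv_drift_le[OF k(2), of G] support(2)[OF that]
    by (simp add: c_def)
  have "measure_pmf.expectation (drv n k (Suc t)) (drv_potential n)
      = measure_pmf.expectation ?p (\<lambda>G. measure_pmf.expectation (drv_step n k G) (drv_potential n))"
    using support finite_set_pmf_drv_step[OF k] by (simp add: expectation_bind_pmf_finite)
  also have "\<dots> \<le> measure_pmf.expectation ?p (\<lambda>G. drv_potential n G + c)"
    using support step by (intro expectation_mono_finite) auto
  also have "\<dots> = measure_pmf.expectation ?p (drv_potential n) + c"
    using support by (subst Bochner_Integration.integral_add) (auto intro: integrable_measure_pmf_finite)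
  also have "\<dots> \<le> max (real n - 2 * real (Suc t)) 0 + (\<Sum>s<Suc t. drv_drift_bound n k s)"
    using Suc.IH by (auto simp: c_def)
  finally show ?case .
qed

lemma expectation_red_plus_green_le:
  assumes k: "2 \<le> k" "k \<le> n" and t: "t \<le> n"
  shows "measure_pmf.expectation (drv n k t) (\<lambda>G. real (num_color n Red t G))
         + measure_pmf.expectation (drv n k t) (\<lambda>G. real (num_color n Green t G))
         \<le> 12 * real n / real k"
proof -
  let ?p = "drv n k t"
  have support: "finite (set_pmf ?p)" "\<And>G. G \<in> set_pmf ?p \<Longrightarrow> length G = t"
    using drv_support[OF k, of t] by auto
  have nonblue_le: "real (num_color n Red t G) + real (num_color n Green t G)
      \<le> drv_potential n G - max (real n - 2 * real t) 0" if "G \<in> set_pmf ?p" for G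
    using num_color_Red_plus_Green[OF support(2)[OF that], of n]
      card_isolated_vertices_ge[of n G] support(2)[OF that]
    by (simp add: drv_potential_def flip: of_nat_add)
  have "measure_pmf.expectation ?p (\<lambda>G. real (num_color n Red t G))
      + measure_pmf.expectation ?p (\<lambda>G. real (num_color n Green t G))
      = measure_pmf.expectation ?p (\<lambda>G. real (num_color n Red t G) + real (num_color n Green t G))"
    using support by (subst Bochner_Integration.integral_add) (auto intro: integrable_measure_pmf_finite)
  also have "\<dots> \<le> measure_pmf.expectation ?p (\<lambda>G. drv_potential n G - max (real n - 2 * real t) 0)"
    using support nonblue_le by (intro expectation_mono_finite) auto
  also have "\<dots> = measure_pmf.expectation ?p (drv_potential n) - max (real n - 2 * real t) 0"
    using support by (subst Bochner_Integration.integral_diff) (auto intro: integrable_measure_pmf_finite)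
  also have "\<dots> \<le> (\<Sum>s<t. drv_drift_bound n k s)"
    using expectation_drv_potential_le[OF k, of t] by simp
  also have "\<dots> \<le> 12 * real n / real k"
    by (rule sum_drv_drift_bound_le[OF k t])
  finally show ?thesis .
qed

theorem lemma1:
  fixes k :: "nat \<Rightarrow> nat"
  assumes k_range: "\<forall>n\<ge>2. 2 \<le> k n \<and> k n \<le> n"
    and k_tendsto: "filterlim k at_top sequentially"
    and k_log: "\<forall>n\<ge>2. log 2 (real n) \<le> real (k n)"
  shows "\<exists>C::real. \<forall>n\<ge>2. \<forall>t\<le>n.
           measure_pmf.expectation (drv n (k n) t) (\<lambda>G. real (num_color n Red t G))
         + measure_pmf.expectation (drv n (k n) t) (\<lambda>G. real (num_color n Green t G))
         \<le> C * real n / real (k n)"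
  using k_range expectation_red_plus_green_le by (intro exI[of _ 12]) blast

end
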